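(* Let $\alpha_1,\dots,\alpha_4$ be constants, $H=H(t,t^-,q,q^-,p,p^-)$ smooth, and $X=\xi(t)\partial_t+\eta(t,q,p)\partial_q+\nu(t,q,p)\partial_p$ with $\xi(t)=\alpha t+f(t)$, $\alpha$ constant and $f$ $\tau$-periodic. Then, with $\dot\xi=D(\xi)$, $$\Big(\xi\frac{\delta}{\delta t}+\eta\frac{\delta}{\delta q}+\nu\frac{\delta}{\delta p}\Big)\Omega\equiv X\Big(\xi\frac{\delta\tilde H}{\delta t}+\eta\frac{\delta\tilde H}{\delta q}+\nu\frac{\delta\tilde H}{\delta p}\Big)+\dot\xi\Big(\xi\frac{\delta\tilde H}{\delta t}+\eta\frac{\delta\tilde H}{\delta q}+\nu\frac{\delta\tilde H}{\delta p}\Big).$$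
   Context: Constant delay $\tau>0$; $t^\pm=t\pm\tau$, $f^\pm=f(t\pm\tau)$; scalar $q,p$. $S_\pm$: forward/backward shift operators on expressions; $\xi^\pm=S_\pm(\xi)$ etc.; $H^+=S_+(H)$. $D$: total derivative acting on variables at $t^-,t,t^+$. $\tilde H=p^{-}(\alpha_{1}\dot{q}+\alpha_{2}\dot{q}^{-})+p(\alpha_{3}\dot{q}+\alpha_{4}\dot{q}^{-})-H$. For $F$ a function of $(t,t^-,q,q^-,p,p^-,\dot q,\dot q^-,\dot p,\dot p^-)$: $\frac{\delta F}{\delta p}=\frac{\partial F}{\partial p}-D\frac{\partial F}{\partial\dot p}+S_+\Big(\frac{\partial F}{\partial p^-}-D\frac{\partial F}{\partial\dot p^-}\Big)$, $\frac{\delta F}{\delta q}=\frac{\partial F}{\partial q}-D\frac{\partial F}{\partial\dot q}+S_+\Big(\frac{\partial F}{\partial q^-}-D\frac{\partial F}{\partial\dot q^-}\Big)$, $\frac{\delta F}{\delta t}=\frac{\partial F}{\partial t}+D\Big(\dot q\frac{\partial F}{\partial\dot q}+\dot p\frac{\partial F}{\partial\dot p}\Big)+S_+\Big(\frac{\partial F}{\partial t^-}+D\Big(\dot q^-\frac{\partial F}{\partial\dot q^-}+\dot p^-\frac{\partial F}{\partial\dot p^-}\Big)\Big)-D(F)$; in the left-hand side, the coefficients $\xi,\eta,\nu$ multiply the results of the operators applied to $\Omega$. $\Omega=X(\tilde H)+\tilde HD(\xi)=\nu^{-}(\alpha_{1}\dot{q}+\alpha_{2}\dot{q}^{-})+p^{-}(\alpha_{1}D(\eta)+\alpha_{2}D(\eta^{-}))+\nu(\alpha_{3}\dot{q}+\alpha_{4}\dot{q}^{-})+p(\alpha_{3}D(\eta)+\alpha_{4}D(\eta^{-}))+(\alpha_{2}p^{-}+\alpha_{4}p)\dot{q}^{-}D(\xi-\xi^{-})-\xi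 H_t-\eta H_q-\nu H_p-\xi^{-}H_{t^-}-\eta^{-}H_{q^-}-\nu^{-}H_{p^-}-HD(\xi)$. $X$ is prolonged to all variables at $t^-,t,t^+$ and their derivatives by the standard prolongation formulas ($\partial_{\dot q}$-coefficient $D(\eta)-\dot qD(\xi)$, $\partial_{\dot p}$-coefficient $D(\nu)-\dot pD(\xi)$, higher ones analogously), shifted variables carrying shifted coefficients. Variables are considered with $t^+-t=t-t^-=\tau$. *)

theory Defs
  imports "HOL-Analysis.Analysis"
begin

fun Ck :: "nat \<Rightarrow> ('a::real_normed_vector \<Rightarrow> real) \<Rightarrow> bool" where
  "Ck 0 g = continuous_on UNIV g"
| "Ck (Suc k) g = (\<exists>g'. (\<forall>x. (g has_derivative g' x) (at x)) \<and> (\<forall>v. Ck k (\<lambda>x. g' x v)))"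

definition smooth_fn :: "('a::real_normed_vector \<Rightarrow> real) \<Rightarrow> bool" where
  "smooth_fn g = (\<forall>k. Ck k g)"

text \<open>A jet point: for every shift index k (i.e. the lattice point t + k tau) the time
  coordinate t_k, and all derivatives q_k^(j), p_k^(j) of q and p at that point.
  Thus tj z 0 = t, tj z (-1) = t^-, qj z 0 0 = q, qj z (-1) 1 = derivative of q at t^-, etc.\<close>

record jet =
  tj :: "int \<Rightarrow> real"
  qj :: "int \<Rightarrow> nat \<Rightarrow> real"
  pj :: "int \<Rightarrow> nat \<Rightarrow> real"

type_synonym dfun = "jet \<Rightarrow> real"

definition pdt :: "int \<Rightarrow> dfun \<Rightarrow> dfun" where
  "pdt k F = (\<lambda>z. deriv (\<lambda>a. F (z\<lparr>tj := (tj z)(k := a)\<rparr>)) (tj z k))"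

definition pdq :: "int \<Rightarrow> nat \<Rightarrow> dfun \<Rightarrow> dfun" where
  "pdq k j F = (\<lambda>z. deriv (\<lambda>a. F (z\<lparr>qj := (qj z)(k := (qj z k)(j := a))\<rparr>)) (qj z k j))"

definition pdp :: "int \<Rightarrow> nat \<Rightarrow> dfun \<Rightarrow> dfun" where
  "pdp k j F = (\<lambda>z. deriv (\<lambda>a. F (z\<lparr>pj := (pj z)(k := (pj z k)(j := a))\<rparr>)) (pj z k j))"

text \<open>Total derivative D, acting on the variables at all lattice points
  (for differential functions only finitely many terms are nonzero).\<close>

definition Dtot :: "dfun \<Rightarrow> dfun" where
  "Dtot F = (\<lambda>z. infsum (\<lambda>k. pdt k F z) UNIV
     + infsum (\<lambda>(k, j). qj z k (Suc j) * pdq k j F z) UNIV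
     + infsum (\<lambda>(k, j). pj z k (Suc j) * pdp k j F z) UNIV)"

text \<open>Shift operators: Sh 1 = S_+, Sh (-1) = S_-.\<close>

definition jshift :: "int \<Rightarrow> jet \<Rightarrow> jet" where
  "jshift n z = \<lparr>tj = (\<lambda>k. tj z (k + n)), qj = (\<lambda>k. qj z (k + n)), pj = (\<lambda>k. pj z (k + n))\<rparr>"

definition Sh :: "int \<Rightarrow> dfun \<Rightarrow> dfun" where
  "Sh n F = (\<lambda>z. F (jshift n z))"

primrec prq :: "dfun \<Rightarrow> dfun \<Rightarrow> nat \<Rightarrow> dfun" where
  "prq xi eta 0 = eta"
| "prq xi eta (Suc j) = (\<lambda>z. Dtot (prq xi eta j) z - qj z 0 (Suc j) * Dtot xi z)"

primrec prp :: "dfun \<Rightarrow> dfun \<Rightarrow> nat \<Rightarrow> dfun" where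
  "prp xi nu 0 = nu"
| "prp xi nu (Suc j) = (\<lambda>z. Dtot (prp xi nu j) z - pj z 0 (Suc j) * Dtot xi z)"

definition Xpr :: "dfun \<Rightarrow> dfun \<Rightarrow> dfun \<Rightarrow> dfun \<Rightarrow> dfun" where
  "Xpr xi eta nu F = (\<lambda>z. infsum (\<lambda>k. Sh k xi z * pdt k F z) UNIV
     + infsum (\<lambda>(k, j). Sh k (prq xi eta j) z * pdq k j F z) UNIV
     + infsum (\<lambda>(k, j). Sh k (prp xi nu j) z * pdp k j F z) UNIV)"

definition var_p :: "dfun \<Rightarrow> dfun" where
  "var_p F = (\<lambda>z. pdp 0 0 F z - Dtot (pdp 0 1 F) z
     + Sh 1 (\<lambda>w. pdp (-1) 0 F w - Dtot (pdp (-1) 1 F) w) z)"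

definition var_q :: "dfun \<Rightarrow> dfun" where
  "var_q F = (\<lambda>z. pdq 0 0 F z - Dtot (pdq 0 1 F) z
     + Sh 1 (\<lambda>w. pdq (-1) 0 F w - Dtot (pdq (-1) 1 F) w) z)"

definition var_t :: "dfun \<Rightarrow> dfun" where
  "var_t F = (\<lambda>z. pdt 0 F z
     + Dtot (\<lambda>w. qj w 0 1 * pdq 0 1 F w + pj w 0 1 * pdp 0 1 F w) z
     + Sh 1 (\<lambda>w. pdt (-1) F w
          + Dtot (\<lambda>u. qj u (-1) 1 * pdq (-1) 1 F u + pj u (-1) 1 * pdp (-1) 1 F u) w) z
     - Dtot F z)"

definition xi_fn :: "real \<Rightarrow> (real \<Rightarrow> real) \<Rightarrow> dfun" where
  "xi_fn \<alpha> f = (\<lambda>z. \<alpha> * tj z 0 + f (tj z 0))"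

definition lift3 :: "(real \<Rightarrow> real \<Rightarrow> real \<Rightarrow> real) \<Rightarrow> dfun" where
  "lift3 g = (\<lambda>z. g (tj z 0) (qj z 0 0) (pj z 0 0))"

definition Htilde :: "real \<Rightarrow> real \<Rightarrow> real \<Rightarrow> real \<Rightarrow>
    (real \<Rightarrow> real \<Rightarrow> real \<Rightarrow> real \<Rightarrow> real \<Rightarrow> real \<Rightarrow> real) \<Rightarrow> dfun" where
  "Htilde a1 a2 a3 a4 H = (\<lambda>z.
      pj z (-1) 0 * (a1 * qj z 0 1 + a2 * qj z (-1) 1)
    + pj z 0 0 * (a3 * qj z 0 1 + a4 * qj z (-1) 1)
    - H (tj z 0) (tj z (-1)) (qj z 0 0) (qj z (-1) 0) (pj z 0 0) (pj z (-1) 0))"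

definition Omega :: "dfun \<Rightarrow> dfun \<Rightarrow> dfun \<Rightarrow> dfun \<Rightarrow> dfun" where
  "Omega xi eta nu Ht = (\<lambda>z. Xpr xi eta nu Ht z + Ht z * Dtot xi z)"

definition Evar :: "dfun \<Rightarrow> dfun \<Rightarrow> dfun \<Rightarrow> dfun \<Rightarrow> dfun" where
  "Evar xi eta nu F = (\<lambda>z. xi z * var_t F z + eta z * var_q F z + nu z * var_p F z)"

end

theory Submission
  imports Defs
begin

(* Every term of the identity is a polynomial in the jet coordinates, the constants alpha, a1, ..., a4
   and partial derivatives of H, eta, nu and f evaluated at the lattice points t + k tau.  Such terms
   are represented by expressions on which partial derivatives, the total derivative D, the shifts,
   the prolonged field X and the variational operators act by symbolic rules; a partial derivative of
   the smooth data is recorded by a sorted multi-index, which is sound by the symmetry of second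
   derivatives.  After symbolic evaluation the two sides become polynomials in the same atoms, except
   that f and its derivatives occur at t - tau, t and t + tau.  The lattice condition and the
   periodicity of f identify these, and what remains is a ring identity. *)

section \<open>Smooth functions and directional derivatives\<close>

lemma smooth_fn_has_smooth_derivative:
  assumes "smooth_fn (g :: 'a::real_normed_vector \<Rightarrow> real)"
  obtains g' where "\<And>x. (g has_derivative g' x) (at x)" and "\<And>v. smooth_fn (\<lambda>x. g' x v)"
proof -
  from assms have "Ck (Suc 0) g" unfolding smooth_fn_def by blast
  then obtain g' where g': "\<forall>x. (g has_derivative g' x) (at x)" by auto
  have "Ck k (\<lambda>x. g' x v)" for k v
  proof -
    from assms have "Ck (Suc k) g" unfolding smooth_fn_def by blast
    then obtain g'' where g'': "\<forall>x. (g has_derivative g'' x) (at x)" and "\<forall>v. Ck k (\<lambda>x. g'' x v)"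
      by auto
    moreover have "g'' = g'"
      using has_derivative_unique g' g'' by blast
    ultimately show ?thesis by simp
  qed
  with g' that show ?thesis unfolding smooth_fn_def by blast
qed

definition dir_deriv :: "('a::real_normed_vector \<Rightarrow> real) \<Rightarrow> 'a \<Rightarrow> 'a \<Rightarrow> real" where
  "dir_deriv g v x = frechet_derivative g (at x) v"

lemma smooth_fn_has_derivative:
  assumes "smooth_fn g"
  shows "(g has_derivative (\<lambda>v. dir_deriv g v x)) (at x)"
proof -
  obtain g' where "\<And>x. (g has_derivative g' x) (at x)"
    using smooth_fn_has_smooth_derivative[OF assms] by blast
  then show ?thesis
    unfolding dir_deriv_def by (metis frechet_derivative_at)
qed

lemma smooth_fn_dir_deriv:
  assumes "smooth_fn g"
  shows "smooth_fn (dir_deriv g v)"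
proof -
  obtain g' where g': "\<And>x. (g has_derivative g' x) (at x)" and "\<And>v. smooth_fn (\<lambda>x. g' x v)"
    using smooth_fn_has_smooth_derivative[OF assms] by blast
  moreover have "g' x = frechet_derivative g (at x)" for x
    using g' frechet_derivative_at by blast
  ultimately show ?thesis unfolding dir_deriv_def by simp
qed

lemma smooth_fn_isCont:
  assumes "smooth_fn g"
  shows "isCont g x"
proof -
  have "continuous_on UNIV g"
    using assms Ck.simps(1) unfolding smooth_fn_def by blast
  then show ?thesis by (simp add: continuous_on_eq_continuous_at)
qed

lemma dir_deriv_scaleR:
  assumes "smooth_fn g"
  shows "dir_deriv g (r *\<^sub>R v) x = r * dir_deriv g v x"
proof -
  have "linear (\<lambda>v. dir_deriv g v x)"
    using has_derivative_linear[OF smooth_fn_has_derivative[OF assms]] .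
  then show ?thesis unfolding linear_iff by simp
qed

lemma has_real_derivative_along_line:
  assumes "smooth_fn g"
  shows "((\<lambda>a. g (x + (a - c) *\<^sub>R v)) has_real_derivative dir_deriv g v (x + (b - c) *\<^sub>R v)) (at b)"
proof -
  have "((\<lambda>a. x + (a - c) *\<^sub>R v) has_derivative (\<lambda>h. h *\<^sub>R v)) (at b)"
    by (auto intro!: derivative_eq_intros)
  from diff_chain_at[OF this smooth_fn_has_derivative[OF assms]]
  have "((\<lambda>a. g (x + (a - c) *\<^sub>R v)) has_derivative
          (\<lambda>h. dir_deriv g v (x + (b - c) *\<^sub>R v) * h)) (at b)"
    by (simp add: o_def dir_deriv_scaleR[OF assms] mult.commute)
  then show ?thesis unfolding has_field_derivative_def .
qed

lemma second_difference_mean_value: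
  assumes g: "smooth_fn g" and h: "h > 0"
  obtains y where "g (x + h *\<^sub>R u + h *\<^sub>R v) - g (x + h *\<^sub>R u) - g (x + h *\<^sub>R v) + g x
                     = h * (h * dir_deriv (dir_deriv g u) v y)"
    and "norm (y - x) \<le> h * (norm u + norm v)"
proof -
  note line = has_real_derivative_along_line[where c = 0, simplified]
  define P where "P s = g ((x + h *\<^sub>R v) + s *\<^sub>R u) - g (x + s *\<^sub>R u)" for s
  have "(P has_real_derivative
          dir_deriv g u ((x + h *\<^sub>R v) + s *\<^sub>R u) - dir_deriv g u (x + s *\<^sub>R u)) (at s)" for s
    unfolding P_def by (intro DERIV_diff line g)
  with MVT2[OF h, of P "\<lambda>s. dir_deriv g u ((x + h *\<^sub>R v) + s *\<^sub>R u) - dir_deriv g u (x + s *\<^sub>R u)"]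
  obtain \<sigma> where \<sigma>: "0 < \<sigma>" "\<sigma> < h"
    and P_mvt: "P h - P 0 = h * (dir_deriv g u ((x + h *\<^sub>R v) + \<sigma> *\<^sub>R u) - dir_deriv g u (x + \<sigma> *\<^sub>R u))"
    unfolding diff_zero by blast
  define R where "R t = dir_deriv g u ((x + \<sigma> *\<^sub>R u) + t *\<^sub>R v)" for t
  have "(R has_real_derivative dir_deriv (dir_deriv g u) v ((x + \<sigma> *\<^sub>R u) + t *\<^sub>R v)) (at t)" for t
    unfolding R_def by (intro line smooth_fn_dir_deriv g)
  with MVT2[OF h, of R "\<lambda>t. dir_deriv (dir_deriv g u) v ((x + \<sigma> *\<^sub>R u) + t *\<^sub>R v)"]
  obtain \<rho> where \<rho>: "0 < \<rho>" "\<rho> < h"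
    and R_mvt: "R h - R 0 = h * dir_deriv (dir_deriv g u) v ((x + \<sigma> *\<^sub>R u) + \<rho> *\<^sub>R v)"
    unfolding diff_zero by blast
  define y where "y = (x + \<sigma> *\<^sub>R u) + \<rho> *\<^sub>R v"
  have "P h - P 0 = g (x + h *\<^sub>R u + h *\<^sub>R v) - g (x + h *\<^sub>R u) - g (x + h *\<^sub>R v) + g x"
    unfolding P_def by (simp add: algebra_simps)
  moreover have "R h - R 0 = dir_deriv g u ((x + h *\<^sub>R v) + \<sigma> *\<^sub>R u) - dir_deriv g u (x + \<sigma> *\<^sub>R u)"
    unfolding R_def by (simp add: algebra_simps)
  ultimately have "g (x + h *\<^sub>R u + h *\<^sub>R v) - g (x + h *\<^sub>R u) - g (x + h *\<^sub>R v) + g x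
                     = h * (h * dir_deriv (dir_deriv g u) v y)"
    using P_mvt R_mvt unfolding y_def by simp
  moreover have "norm (y - x) \<le> h * (norm u + norm v)"
  proof -
    have "norm (y - x) \<le> \<sigma> * norm u + \<rho> * norm v"
      unfolding y_def using \<sigma> \<rho> norm_triangle_ineq[of "\<sigma> *\<^sub>R u" "\<rho> *\<^sub>R v"] by simp
    also have "\<dots> \<le> h * norm u + h * norm v"
      using \<sigma> \<rho> by (intro add_mono mult_right_mono) auto
    finally show ?thesis by (simp add: algebra_simps)
  qed
  ultimately show ?thesis using that by blast
qed

text \<open>Schwarz's theorem: both second directional derivatives are limits of the same second
  differences.\<close>

lemma dir_deriv_commute:
  assumes g: "smooth_fn g"
  shows "dir_deriv (dir_deriv g u) v x = dir_deriv (dir_deriv g v) u x"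
proof (rule ccontr)
  let ?A = "dir_deriv (dir_deriv g u) v" and ?B = "dir_deriv (dir_deriv g v) u"
  assume "?A x \<noteq> ?B x"
  define e where "e = \<bar>?A x - ?B x\<bar> / 3"
  have e: "e > 0" using \<open>?A x \<noteq> ?B x\<close> unfolding e_def by simp
  have "isCont ?A x" "isCont ?B x"
    using g by (simp_all add: smooth_fn_isCont smooth_fn_dir_deriv)
  then obtain d1 d2 where d: "d1 > 0" "d2 > 0"
    and d1: "\<And>y. norm (y - x) < d1 \<Longrightarrow> \<bar>?A y - ?A x\<bar> < e"
    and d2: "\<And>y. norm (y - x) < d2 \<Longrightarrow> \<bar>?B y - ?B x\<bar> < e"
    using e unfolding continuous_at_eps_delta dist_norm real_norm_def by blast
  define h where "h = min d1 d2 / (2 * (norm u + norm v + 1))"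
  have norms: "norm u + norm v + 1 > 0" by (simp add: add_nonneg_pos)
  then have h: "h > 0" unfolding h_def using d by simp
  have small: "h * (norm u + norm v) < min d1 d2"
  proof -
    have "h * (norm u + norm v) \<le> h * (norm u + norm v + 1)" using h by simp
    also have "\<dots> = min d1 d2 / 2" unfolding h_def using norms by (simp add: field_simps)
    finally show ?thesis using d by linarith
  qed
  obtain y1 where y1: "g (x + h *\<^sub>R u + h *\<^sub>R v) - g (x + h *\<^sub>R u) - g (x + h *\<^sub>R v) + g x
                        = h * (h * ?A y1)" "norm (y1 - x) \<le> h * (norm u + norm v)"
    using second_difference_mean_value[OF g h] .
  obtain y2 where y2: "g (x + h *\<^sub>R v + h *\<^sub>R u) - g (x + h *\<^sub>R v) - g (x + h *\<^sub>R u) + g x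
                        = h * (h * ?B y2)" "norm (y2 - x) \<le> h * (norm v + norm u)"
    using second_difference_mean_value[OF g h] .
  have "x + h *\<^sub>R v + h *\<^sub>R u = x + h *\<^sub>R u + h *\<^sub>R v" by (simp add: algebra_simps)
  then have "h * (h * ?A y1) = h * (h * ?B y2)" using y1(1) y2(1) by (simp add: algebra_simps)
  then have "?A y1 = ?B y2" using h by simp
  moreover have "\<bar>?A y1 - ?A x\<bar> < e" "\<bar>?B y2 - ?B x\<bar> < e"
    using d1 d2 y1(2) y2(2) small by (simp_all add: add.commute)
  moreover have "\<bar>?A x - ?B x\<bar> = 3 * e" unfolding e_def by simp
  ultimately show False using e by linarith
qed

primrec dir_derivs :: "('a::real_normed_vector \<Rightarrow> real) \<Rightarrow> 'a list \<Rightarrow> 'a \<Rightarrow> real" where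
  "dir_derivs g [] = g"
| "dir_derivs g (v # vs) = dir_derivs (dir_deriv g v) vs"

lemma smooth_fn_dir_derivs: "smooth_fn g \<Longrightarrow> smooth_fn (dir_derivs g vs)"
  by (induction vs arbitrary: g) (simp_all add: smooth_fn_dir_deriv)

lemma dir_derivs_snoc: "dir_derivs g (vs @ [v]) = dir_deriv (dir_derivs g vs) v"
  by (induction vs arbitrary: g) simp_all

lemma dir_derivs_snoc_eq_Cons:
  assumes "smooth_fn g"
  shows "dir_derivs g (vs @ [v]) = dir_derivs g (v # vs)"
  using assms
proof (induction vs arbitrary: g)
  case (Cons u vs)
  have "dir_deriv (dir_deriv g u) v = dir_deriv (dir_deriv g v) u"
    by (rule ext) (rule dir_deriv_commute[OF Cons.prems])
  then show ?case using Cons.IH[OF smooth_fn_dir_deriv[OF Cons.prems]] by simp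
qed simp

lemma dir_derivs_insort:
  assumes "smooth_fn g"
  shows "dir_derivs g (map e (insort i ms)) = dir_derivs g (map e ms @ [e i])"
  using assms
proof (induction ms arbitrary: g)
  case (Cons m ms)
  show ?case
  proof (cases "i \<le> m")
    case True
    then have "dir_derivs g (map e (insort i (m # ms))) = dir_derivs g (e i # map e (m # ms))"
      by simp
    then show ?thesis using dir_derivs_snoc_eq_Cons[OF Cons.prems] by metis
  next
    case False
    then show ?thesis using Cons.IH[OF smooth_fn_dir_deriv[OF Cons.prems]] by simp
  qed
qed simp

lemma dir_deriv_periodic:
  assumes g: "smooth_fn g" and per: "\<And>x. g (x + T) = g x"
  shows "dir_deriv g v (x + T) = dir_deriv g v x"
proof -
  have "((\<lambda>y. y + T) has_derivative (\<lambda>h. h)) (at x)"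
    by (auto intro!: derivative_eq_intros)
  from diff_chain_at[OF this smooth_fn_has_derivative[OF g]]
  have "(g has_derivative (\<lambda>h. dir_deriv g h (x + T))) (at x)"
    by (simp add: o_def per)
  then have "(\<lambda>h. dir_deriv g h (x + T)) = (\<lambda>h. dir_deriv g h x)"
    using has_derivative_unique smooth_fn_has_derivative[OF g] by blast
  then show ?thesis by metis
qed

lemma dir_derivs_periodic:
  assumes "smooth_fn g" and "\<And>x. g (x + T) = g x"
  shows "dir_derivs g vs (x + T) = dir_derivs g vs x"
  using assms
proof (induction vs arbitrary: g)
  case (Cons v vs)
  have "smooth_fn (dir_deriv g v)" and "\<And>x. dir_deriv g v (x + T) = dir_deriv g v x"
    using Cons.prems by (simp_all add: smooth_fn_dir_deriv dir_deriv_periodic)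
  then show ?case using Cons.IH by simp
qed simp

lemma has_real_derivative_dir_derivs_along:
  assumes "smooth_fn g" and "\<And>a. A a = x + (a - c) *\<^sub>R u"
  shows "((\<lambda>a. dir_derivs g vs (A a)) has_real_derivative dir_derivs g (vs @ [u]) x) (at c)"
  using has_real_derivative_along_line[OF smooth_fn_dir_derivs[OF assms(1)],
      where x = x and c = c and v = u and b = c]
  by (simp add: assms(2) dir_derivs_snoc)

section \<open>Expressions over the delay jet space\<close>

datatype coord = Ct int | Cq int nat | Cp int nat

fun coord_val :: "jet \<Rightarrow> coord \<Rightarrow> real" where
  "coord_val w (Ct k) = tj w k"
| "coord_val w (Cq k j) = qj w k j"
| "coord_val w (Cp k j) = pj w k j"

fun coord_upd :: "jet \<Rightarrow> coord \<Rightarrow> real \<Rightarrow> jet" where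
  "coord_upd w (Ct k) a = w\<lparr>tj := (tj w)(k := a)\<rparr>"
| "coord_upd w (Cq k j) a = w\<lparr>qj := (qj w)(k := (qj w k)(j := a))\<rparr>"
| "coord_upd w (Cp k j) a = w\<lparr>pj := (pj w)(k := (pj w k)(j := a))\<rparr>"

lemma coord_val_upd: "coord_val (coord_upd w c a) c' = (if c' = c then a else coord_val w c')"
  by (cases c; cases c') auto

lemma coord_upd_same [simp]: "coord_upd w c (coord_val w c) = w"
  by (cases c) auto

lemma sum_coord_split:
  fixes \<psi> :: "coord \<Rightarrow> 'a::comm_monoid_add"
  assumes "finite S"
  shows "sum \<psi> S = (\<Sum>k\<in>Ct -` S. \<psi> (Ct k)) + (\<Sum>(k, j)\<in>case_prod Cq -` S. \<psi> (Cq k j))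
                    + (\<Sum>(k, j)\<in>case_prod Cp -` S. \<psi> (Cp k j))"
  using assms
proof (induction S rule: finite_induct)
  case (insert x F)
  have fin: "finite (Ct -` F)" "finite (case_prod Cq -` F)" "finite (case_prod Cp -` F)"
    using insert(1) by (auto intro!: finite_vimageI simp: inj_def)
  show ?case
  proof (cases x)
    case (Ct k)
    then have "Ct -` insert x F = insert k (Ct -` F)" "case_prod Cq -` insert x F = case_prod Cq -` F"
      "case_prod Cp -` insert x F = case_prod Cp -` F" "k \<notin> Ct -` F"
      using insert(2) by auto
    then show ?thesis using insert Ct fin by (simp add: ac_simps)
  next
    case (Cq k j)
    then have "Ct -` insert x F = Ct -` F" "case_prod Cq -` insert x F = insert (k, j) (case_prod Cq -` F)"
      "case_prod Cp -` insert x F = case_prod Cp -` F" "(k, j) \<notin> case_prod Cq -` F"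
      using insert(2) by auto
    then show ?thesis using insert Cq fin by (simp add: ac_simps)
  next
    case (Cp k j)
    then have "Ct -` insert x F = Ct -` F" "case_prod Cq -` insert x F = case_prod Cq -` F"
      "case_prod Cp -` insert x F = insert (k, j) (case_prod Cp -` F)" "(k, j) \<notin> case_prod Cp -` F"
      using insert(2) by auto
    then show ?thesis using insert Cp fin by (simp add: ac_simps)
  qed
qed simp

lemma infsum_eq_sum_support:
  fixes \<phi> :: "'a \<Rightarrow> real"
  assumes "finite A" and "\<And>x. x \<notin> A \<Longrightarrow> \<phi> x = 0"
  shows "infsum \<phi> UNIV = sum \<phi> A"
proof -
  have "infsum \<phi> UNIV = infsum \<phi> A"
    by (rule infsum_cong_neutral) (use assms(2) in auto)
  then show ?thesis using assms(1) by simp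
qed

datatype fsym = SH | Seta | Snu | Sf

type_synonym real6 = "real \<times> real \<times> real \<times> real \<times> real \<times> real"
type_synonym real3 = "real \<times> real \<times> real"

fun slots :: "fsym \<Rightarrow> int \<Rightarrow> (nat \<times> coord) list" where
  "slots SH s = [(0, Ct s), (1, Ct (s - 1)), (2, Cq s 0), (3, Cq (s - 1) 0), (4, Cp s 0), (5, Cp (s - 1) 0)]"
| "slots Sf s = [(0, Ct s)]"
| "slots _ s = [(0, Ct s), (1, Cq s 0), (2, Cp s 0)]"

definition slot_of :: "fsym \<Rightarrow> int \<Rightarrow> coord \<Rightarrow> nat option" where
  "slot_of f s = map_of (map prod.swap (slots f s))"

definition H_args :: "int \<Rightarrow> jet \<Rightarrow> real6" where
  "H_args s w = (tj w s, tj w (s - 1), qj w s 0, qj w (s - 1) 0, pj w s 0, pj w (s - 1) 0)"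

definition field_args :: "int \<Rightarrow> jet \<Rightarrow> real3" where
  "field_args s w = (tj w s, qj w s 0, pj w s 0)"

definition unit6 :: "nat \<Rightarrow> real6" where
  "unit6 i = (of_bool (i = 0), of_bool (i = 1), of_bool (i = 2), of_bool (i = 3), of_bool (i = 4),
              of_bool (i = 5))"

definition unit3 :: "nat \<Rightarrow> real3" where
  "unit3 i = (of_bool (i = 0), of_bool (i = 1), of_bool (i = 2))"

lemma slot_of_SomeD: "slot_of f s c = Some i \<Longrightarrow> (i, c) \<in> set (slots f s)"
  by (auto simp: slot_of_def dest!: map_of_SomeD)

lemma distinct_slot_coords: "distinct (map snd (slots f s))"
  by (cases f) auto

lemma slot_of_slots: "(i, c) \<in> set (slots f s) \<Longrightarrow> slot_of f s c = Some i"
  unfolding slot_of_def by (rule map_of_is_SomeI) (auto simp: o_def distinct_slot_coords)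

lemma slot_of_Snu: "slot_of Snu = slot_of Seta"
  by (simp add: fun_eq_iff slot_of_def)

lemma H_args_coord_upd:
  "H_args s (coord_upd w c a) = (case slot_of SH s c of
      None \<Rightarrow> H_args s w
    | Some i \<Rightarrow> H_args s w + (a - coord_val w c) *\<^sub>R unit6 i)"
  by (cases c) (auto simp: H_args_def unit6_def slot_of_def)

lemma field_args_coord_upd:
  "field_args s (coord_upd w c a) = (case slot_of Seta s c of
      None \<Rightarrow> field_args s w
    | Some i \<Rightarrow> field_args s w + (a - coord_val w c) *\<^sub>R unit3 i)"
  by (cases c) (auto simp: field_args_def unit3_def slot_of_def)

lemma tj_coord_upd:
  "tj (coord_upd w c a) s = (case slot_of Sf s c of
      None \<Rightarrow> tj w s
    | Some i \<Rightarrow> tj w s + (a - coord_val w c) *\<^sub>R 1)"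
  by (cases c) (auto simp: slot_of_def)

text \<open>Fun f ms s is the partial derivative of f in the argument positions ms (kept sorted), with
  argument i read from the coordinate paired with i in slots f s; Par n is the n-th constant.\<close>

datatype expr = Lit int | Par nat | Var coord | Fun fsym "nat list" int | Add expr expr | Mul expr expr

definition sadd :: "expr \<Rightarrow> expr \<Rightarrow> expr" where
  "sadd a b = (if a = Lit 0 then b else if b = Lit 0 then a else Add a b)"

definition smul :: "expr \<Rightarrow> expr \<Rightarrow> expr" where
  "smul a b = (if a = Lit 0 \<or> b = Lit 0 then Lit 0 else if a = Lit 1 then b else if b = Lit 1 then a
               else Mul a b)"

definition sneg :: "expr \<Rightarrow> expr" where
  "sneg a = smul (Lit (-1)) a"

fun ssum :: "expr list \<Rightarrow> expr" where
  "ssum [] = Lit 0"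
| "ssum (x # xs) = sadd x (ssum xs)"

fun vars :: "expr \<Rightarrow> coord set" where
  "vars (Var c) = {c}"
| "vars (Fun f ms s) = snd ` set (slots f s)"
| "vars (Add a b) = vars a \<union> vars b"
| "vars (Mul a b) = vars a \<union> vars b"
| "vars _ = {}"

lemma finite_vars [simp]: "finite (vars e)"
  by (induction e) auto

fun sdiff :: "coord \<Rightarrow> expr \<Rightarrow> expr" where
  "sdiff c (Var c') = (if c' = c then Lit 1 else Lit 0)"
| "sdiff c (Fun f ms s) = (case slot_of f s c of None \<Rightarrow> Lit 0 | Some i \<Rightarrow> Fun f (insort i ms) s)"
| "sdiff c (Add a b) = sadd (sdiff c a) (sdiff c b)"
| "sdiff c (Mul a b) = sadd (smul (sdiff c a) b) (smul a (sdiff c b))"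
| "sdiff c _ = Lit 0"

fun shift_coord :: "int \<Rightarrow> coord \<Rightarrow> coord" where
  "shift_coord n (Ct k) = Ct (k + n)"
| "shift_coord n (Cq k j) = Cq (k + n) j"
| "shift_coord n (Cp k j) = Cp (k + n) j"

fun sshift :: "int \<Rightarrow> expr \<Rightarrow> expr" where
  "sshift n (Var c) = Var (shift_coord n c)"
| "sshift n (Fun f ms s) = Fun f ms (s + n)"
| "sshift n (Add a b) = Add (sshift n a) (sshift n b)"
| "sshift n (Mul a b) = Mul (sshift n a) (sshift n b)"
| "sshift n e = e"

fun sderiv :: "(coord \<Rightarrow> expr) \<Rightarrow> expr \<Rightarrow> expr" where
  "sderiv \<kappa> (Var c) = \<kappa> c"
| "sderiv \<kappa> (Fun f ms s) = ssum (map (\<lambda>(i, c). smul (\<kappa> c) (Fun f (insort i ms) s)) (slots f s))"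
| "sderiv \<kappa> (Add a b) = sadd (sderiv \<kappa> a) (sderiv \<kappa> b)"
| "sderiv \<kappa> (Mul a b) = sadd (smul (sderiv \<kappa> a) b) (smul a (sderiv \<kappa> b))"
| "sderiv \<kappa> _ = Lit 0"

fun total_coef :: "coord \<Rightarrow> expr" where
  "total_coef (Ct k) = Lit 1"
| "total_coef (Cq k j) = Var (Cq k (Suc j))"
| "total_coef (Cp k j) = Var (Cp k (Suc j))"

definition sDtot :: "expr \<Rightarrow> expr" where
  "sDtot e = sderiv total_coef e"

primrec sprq :: "expr \<Rightarrow> expr \<Rightarrow> nat \<Rightarrow> expr" where
  "sprq xi eta 0 = eta"
| "sprq xi eta (Suc j) = sadd (sDtot (sprq xi eta j)) (sneg (smul (Var (Cq 0 (Suc j))) (sDtot xi)))"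

primrec sprp :: "expr \<Rightarrow> expr \<Rightarrow> nat \<Rightarrow> expr" where
  "sprp xi nu 0 = nu"
| "sprp xi nu (Suc j) = sadd (sDtot (sprp xi nu j)) (sneg (smul (Var (Cp 0 (Suc j))) (sDtot xi)))"

fun prol_coef :: "expr \<Rightarrow> expr \<Rightarrow> expr \<Rightarrow> coord \<Rightarrow> expr" where
  "prol_coef xi eta nu (Ct k) = sshift k xi"
| "prol_coef xi eta nu (Cq k j) = sshift k (sprq xi eta j)"
| "prol_coef xi eta nu (Cp k j) = sshift k (sprp xi nu j)"

definition sXpr :: "expr \<Rightarrow> expr \<Rightarrow> expr \<Rightarrow> expr \<Rightarrow> expr" where
  "sXpr xi eta nu e = sderiv (prol_coef xi eta nu) e"

definition svar_q :: "expr \<Rightarrow> expr" where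
  "svar_q e = sadd (sadd (sdiff (Cq 0 0) e) (sneg (sDtot (sdiff (Cq 0 1) e))))
      (sshift 1 (sadd (sdiff (Cq (-1) 0) e) (sneg (sDtot (sdiff (Cq (-1) 1) e)))))"

definition svar_p :: "expr \<Rightarrow> expr" where
  "svar_p e = sadd (sadd (sdiff (Cp 0 0) e) (sneg (sDtot (sdiff (Cp 0 1) e))))
      (sshift 1 (sadd (sdiff (Cp (-1) 0) e) (sneg (sDtot (sdiff (Cp (-1) 1) e)))))"

definition svar_t :: "expr \<Rightarrow> expr" where
  "svar_t e = sadd (sadd (sadd (sdiff (Ct 0) e)
        (sDtot (sadd (smul (Var (Cq 0 1)) (sdiff (Cq 0 1) e)) (smul (Var (Cp 0 1)) (sdiff (Cp 0 1) e)))))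
      (sshift 1 (sadd (sdiff (Ct (-1)) e)
        (sDtot (sadd (smul (Var (Cq (-1) 1)) (sdiff (Cq (-1) 1) e))
                     (smul (Var (Cp (-1) 1)) (sdiff (Cp (-1) 1) e)))))))
      (sneg (sDtot e))"

definition sEvar :: "expr \<Rightarrow> expr \<Rightarrow> expr \<Rightarrow> expr \<Rightarrow> expr" where
  "sEvar xi eta nu e = sadd (sadd (smul xi (svar_t e)) (smul eta (svar_q e))) (smul nu (svar_p e))"

definition sOmega :: "expr \<Rightarrow> expr \<Rightarrow> expr \<Rightarrow> expr \<Rightarrow> expr" where
  "sOmega xi eta nu e = sadd (sXpr xi eta nu e) (smul e (sDtot xi))"

section \<open>Semantics of expressions\<close>

locale smooth_symbols =
  fixes H_fn :: "real6 \<Rightarrow> real" and eta_fn nu_fn :: "real3 \<Rightarrow> real" and f_fn :: "real \<Rightarrow> real"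
    and par :: "real list"
  assumes smooth_H: "smooth_fn H_fn" and smooth_eta: "smooth_fn eta_fn"
    and smooth_nu: "smooth_fn nu_fn" and smooth_f: "smooth_fn f_fn"
begin

fun fun_val :: "fsym \<Rightarrow> nat list \<Rightarrow> int \<Rightarrow> jet \<Rightarrow> real" where
  "fun_val SH ms s w = dir_derivs H_fn (map unit6 ms) (H_args s w)"
| "fun_val Seta ms s w = dir_derivs eta_fn (map unit3 ms) (field_args s w)"
| "fun_val Snu ms s w = dir_derivs nu_fn (map unit3 ms) (field_args s w)"
| "fun_val Sf ms s w = dir_derivs f_fn (map (\<lambda>_. 1) ms) (tj w s)"

fun sem :: "expr \<Rightarrow> jet \<Rightarrow> real" where
  "sem (Lit c) w = of_int c"
| "sem (Par n) w = par ! n"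
| "sem (Var c) w = coord_val w c"
| "sem (Fun f ms s) w = fun_val f ms s w"
| "sem (Add a b) w = sem a w + sem b w"
| "sem (Mul a b) w = sem a w * sem b w"

lemma sem_sadd [simp]: "sem (sadd a b) w = sem a w + sem b w"
  by (auto simp: sadd_def)

lemma sem_smul [simp]: "sem (smul a b) w = sem a w * sem b w"
  by (auto simp: smul_def)

lemma sem_sneg [simp]: "sem (sneg a) w = - sem a w"
  by (simp add: sneg_def)

lemma sem_ssum: "sem (ssum xs) w = (\<Sum>x\<leftarrow>xs. sem x w)"
  by (induction xs) simp_all

lemma fun_val_has_derivative:
  "((\<lambda>a. fun_val f ms s (coord_upd w c a)) has_real_derivative
      (case slot_of f s c of None \<Rightarrow> 0 | Some i \<Rightarrow> fun_val f (insort i ms) s w)) (at (coord_val w c))"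
proof (cases "slot_of f s c")
  case None
  then show ?thesis
    by (cases f) (simp_all add: H_args_coord_upd field_args_coord_upd tj_coord_upd slot_of_Snu)
next
  case (Some i)
  show ?thesis
  proof (cases f)
    case SH
    have "((\<lambda>a. dir_derivs H_fn (map unit6 ms) (H_args s (coord_upd w c a))) has_real_derivative
            dir_derivs H_fn (map unit6 ms @ [unit6 i]) (H_args s w)) (at (coord_val w c))"
      using Some SH by (intro has_real_derivative_dir_derivs_along smooth_H) (simp add: H_args_coord_upd)
    then show ?thesis using Some SH by (simp add: dir_derivs_insort[OF smooth_H])
  next
    case Seta
    have "((\<lambda>a. dir_derivs eta_fn (map unit3 ms) (field_args s (coord_upd w c a))) has_real_derivative
            dir_derivs eta_fn (map unit3 ms @ [unit3 i]) (field_args s w)) (at (coord_val w c))"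
      using Some Seta by (intro has_real_derivative_dir_derivs_along smooth_eta)
        (simp add: field_args_coord_upd)
    then show ?thesis using Some Seta by (simp add: dir_derivs_insort[OF smooth_eta])
  next
    case Snu
    have "((\<lambda>a. dir_derivs nu_fn (map unit3 ms) (field_args s (coord_upd w c a))) has_real_derivative
            dir_derivs nu_fn (map unit3 ms @ [unit3 i]) (field_args s w)) (at (coord_val w c))"
      using Some Snu by (intro has_real_derivative_dir_derivs_along smooth_nu)
        (simp add: field_args_coord_upd slot_of_Snu)
    then show ?thesis using Some Snu by (simp add: dir_derivs_insort[OF smooth_nu])
  next
    case Sf
    have "((\<lambda>a. dir_derivs f_fn (map (\<lambda>_. 1) ms) (tj (coord_upd w c a) s)) has_real_derivative
            dir_derivs f_fn (map (\<lambda>_. 1) ms @ [1]) (tj w s)) (at (coord_val w c))"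
      using Some Sf by (intro has_real_derivative_dir_derivs_along smooth_f)
        (simp only: tj_coord_upd option.case)
    moreover have "dir_derivs f_fn (map (\<lambda>_. 1) (insort i ms)) = dir_derivs f_fn (map (\<lambda>_. 1) ms @ [1])"
      using dir_derivs_insort[OF smooth_f, of "\<lambda>_. 1" i ms] by simp
    ultimately show ?thesis using Some Sf by simp
  qed
qed

lemma sdiff_has_derivative:
  "((\<lambda>a. sem e (coord_upd w c a)) has_real_derivative sem (sdiff c e) w) (at (coord_val w c))"
proof (induction e)
  case (Var c')
  then show ?case by (simp add: coord_val_upd)
next
  case (Fun f ms s)
  then show ?case
    using fun_val_has_derivative[of f ms s w c] by (cases "slot_of f s c") simp_all
next
  case (Add a b)
  then show ?case by (simp add: DERIV_add)
next
  case (Mul a b)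
  from DERIV_mult'[OF Mul.IH] show ?case by (simp add: add.commute)
qed simp_all

lemma deriv_sem_coord_upd: "deriv (\<lambda>a. sem e (coord_upd w c a)) (coord_val w c) = sem (sdiff c e) w"
  by (rule DERIV_imp_deriv[OF sdiff_has_derivative])

lemma pd_sem:
  "pdt k (sem e) = sem (sdiff (Ct k) e)"
  "pdq k j (sem e) = sem (sdiff (Cq k j) e)"
  "pdp k j (sem e) = sem (sdiff (Cp k j) e)"
  using deriv_sem_coord_upd[of e _ "Ct k"] deriv_sem_coord_upd[of e _ "Cq k j"]
    deriv_sem_coord_upd[of e _ "Cp k j"]
  by (simp_all add: fun_eq_iff pdt_def pdq_def pdp_def)

lemma sdiff_eq_0_outside_vars: "c \<notin> vars e \<Longrightarrow> sem (sdiff c e) w = 0"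
proof (induction e)
  case (Fun f ms s)
  then show ?case
    using slot_of_SomeD by (cases "slot_of f s c") force+
qed auto

lemma sum_vars_superset:
  assumes "finite S" and "vars e \<subseteq> S"
  shows "(\<Sum>c\<in>S. \<phi> c * sem (sdiff c e) w) = (\<Sum>c\<in>vars e. \<phi> c * sem (sdiff c e) w)"
  by (rule sum.mono_neutral_right[OF assms]) (simp add: sdiff_eq_0_outside_vars)

lemma sem_sderiv: "sem (sderiv \<kappa> e) w = (\<Sum>c\<in>vars e. sem (\<kappa> c) w * sem (sdiff c e) w)"
proof (induction e)
  case (Fun f ms s)
  have "sem (sderiv \<kappa> (Fun f ms s)) w
          = (\<Sum>(i, c)\<leftarrow>slots f s. sem (\<kappa> c) w * fun_val f (insort i ms) s w)"
    by (simp add: sem_ssum o_def split_def)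
  also have "\<dots> = (\<Sum>(i, c)\<leftarrow>slots f s. sem (\<kappa> c) w * sem (sdiff c (Fun f ms s)) w)"
    by (intro arg_cong[where f = sum_list] map_cong) (auto simp: slot_of_slots)
  also have "\<dots> = (\<Sum>c\<leftarrow>map snd (slots f s). sem (\<kappa> c) w * sem (sdiff c (Fun f ms s)) w)"
    by (simp add: o_def split_def)
  also have "\<dots> = (\<Sum>c\<in>set (map snd (slots f s)). sem (\<kappa> c) w * sem (sdiff c (Fun f ms s)) w)"
    by (rule sum_list_distinct_conv_sum_set[OF distinct_slot_coords])
  finally show ?case by (simp only: vars.simps set_map)
next
  case (Add a b)
  let ?S = "vars a \<union> vars b"
  have "sem (sderiv \<kappa> (Add a b)) w
          = (\<Sum>c\<in>vars a. sem (\<kappa> c) w * sem (sdiff c a) w) + (\<Sum>c\<in>vars b. sem (\<kappa> c) w * sem (sdiff c b) w)"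
    using Add.IH by simp
  also have "\<dots> = (\<Sum>c\<in>?S. sem (\<kappa> c) w * sem (sdiff c a) w) + (\<Sum>c\<in>?S. sem (\<kappa> c) w * sem (sdiff c b) w)"
    using sum_vars_superset[of ?S a] sum_vars_superset[of ?S b] by simp
  also have "\<dots> = (\<Sum>c\<in>?S. sem (\<kappa> c) w * sem (sdiff c (Add a b)) w)"
    by (simp add: sum.distrib distrib_left)
  finally show ?case by (simp only: vars.simps)
next
  case (Mul a b)
  let ?S = "vars a \<union> vars b"
  have "sem (sderiv \<kappa> (Mul a b)) w
          = (\<Sum>c\<in>vars a. sem (\<kappa> c) w * sem (sdiff c a) w) * sem b w
            + sem a w * (\<Sum>c\<in>vars b. sem (\<kappa> c) w * sem (sdiff c b) w)"
    using Mul.IH by simp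
  also have "\<dots> = (\<Sum>c\<in>?S. sem (\<kappa> c) w * sem (sdiff c a) w) * sem b w
                   + sem a w * (\<Sum>c\<in>?S. sem (\<kappa> c) w * sem (sdiff c b) w)"
    using sum_vars_superset[of ?S a] sum_vars_superset[of ?S b] by simp
  also have "\<dots> = (\<Sum>c\<in>?S. sem (\<kappa> c) w * sem (sdiff c (Mul a b)) w)"
    by (simp add: sum.distrib sum_distrib_left sum_distrib_right algebra_simps)
  finally show ?case by (simp only: vars.simps)
qed simp_all

lemma sem_sshift: "sem (sshift n e) w = sem e (jshift n w)"
proof (induction e)
  case (Var c)
  then show ?case by (cases c) (simp_all add: jshift_def)
next
  case (Fun f ms s)
  have shift: "s - 1 + n = s + n - 1" by simp
  show ?case by (cases f) (simp_all add: jshift_def H_args_def field_args_def shift)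
qed simp_all

lemma Sh_sem: "Sh n (sem e) = sem (sshift n e)"
  by (simp add: fun_eq_iff Sh_def sem_sshift)

lemma infsum_coords_sem:
  "infsum (\<lambda>k. \<phi> (Ct k) * pdt k (sem e) w) UNIV
   + infsum (\<lambda>(k, j). \<phi> (Cq k j) * pdq k j (sem e) w) UNIV
   + infsum (\<lambda>(k, j). \<phi> (Cp k j) * pdp k j (sem e) w) UNIV
   = (\<Sum>c\<in>vars e. \<phi> c * sem (sdiff c e) w)"
proof -
  have fin: "finite (Ct -` vars e)" "finite (case_prod Cq -` vars e)" "finite (case_prod Cp -` vars e)"
    by (auto intro!: finite_vimageI simp: inj_def)
  have "infsum (\<lambda>k. \<phi> (Ct k) * sem (sdiff (Ct k) e) w) UNIV
          = (\<Sum>k\<in>Ct -` vars e. \<phi> (Ct k) * sem (sdiff (Ct k) e) w)"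
    by (rule infsum_eq_sum_support[OF fin(1)]) (simp add: sdiff_eq_0_outside_vars)
  moreover have "infsum (\<lambda>(k, j). \<phi> (Cq k j) * sem (sdiff (Cq k j) e) w) UNIV
          = (\<Sum>(k, j)\<in>case_prod Cq -` vars e. \<phi> (Cq k j) * sem (sdiff (Cq k j) e) w)"
    by (rule infsum_eq_sum_support[OF fin(2)]) (auto simp: sdiff_eq_0_outside_vars)
  moreover have "infsum (\<lambda>(k, j). \<phi> (Cp k j) * sem (sdiff (Cp k j) e) w) UNIV
          = (\<Sum>(k, j)\<in>case_prod Cp -` vars e. \<phi> (Cp k j) * sem (sdiff (Cp k j) e) w)"
    by (rule infsum_eq_sum_support[OF fin(3)]) (auto simp: sdiff_eq_0_outside_vars)
  ultimately show ?thesis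
    unfolding sum_coord_split[OF finite_vars, of _ e] pd_sem by simp
qed

lemma Dtot_sem: "Dtot (sem e) = sem (sDtot e)"
proof
  fix w
  have "Dtot (sem e) w = (\<Sum>c\<in>vars e. sem (total_coef c) w * sem (sdiff c e) w)"
    using infsum_coords_sem[of "\<lambda>c. sem (total_coef c) w" e w] by (simp add: Dtot_def)
  then show "Dtot (sem e) w = sem (sDtot e) w"
    by (simp add: sDtot_def sem_sderiv)
qed

lemma prq_sem: "prq (sem xi) (sem eta) j = sem (sprq xi eta j)"
  by (induction j) (simp_all add: Dtot_sem)

lemma prp_sem: "prp (sem xi) (sem nu) j = sem (sprp xi nu j)"
  by (induction j) (simp_all add: Dtot_sem)

lemma Xpr_sem: "Xpr (sem xi) (sem eta) (sem nu) (sem e) = sem (sXpr xi eta nu e)"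
proof
  fix w
  have "Xpr (sem xi) (sem eta) (sem nu) (sem e) w
          = (\<Sum>c\<in>vars e. sem (prol_coef xi eta nu c) w * sem (sdiff c e) w)"
    using infsum_coords_sem[of "\<lambda>c. sem (prol_coef xi eta nu c) w" e w]
    by (simp add: Xpr_def Sh_sem prq_sem prp_sem)
  then show "Xpr (sem xi) (sem eta) (sem nu) (sem e) w = sem (sXpr xi eta nu e) w"
    by (simp add: sXpr_def sem_sderiv)
qed

lemma var_q_sem: "var_q (sem e) = sem (svar_q e)"
  by (simp add: fun_eq_iff var_q_def svar_q_def pd_sem Dtot_sem Sh_def sem_sshift)

lemma var_p_sem: "var_p (sem e) = sem (svar_p e)"
  by (simp add: fun_eq_iff var_p_def svar_p_def pd_sem Dtot_sem Sh_def sem_sshift)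

lemma var_t_sem: "var_t (sem e) = sem (svar_t e)"
proof -
  have "(\<lambda>w. qj w k 1 * sem a w + pj w k 1 * sem b w)
          = sem (sadd (smul (Var (Cq k 1)) a) (smul (Var (Cp k 1)) b))" for k a b
    by (simp add: fun_eq_iff)
  then show ?thesis
    unfolding var_t_def svar_t_def
    by (simp add: pd_sem Dtot_sem) (simp add: fun_eq_iff Sh_def sem_sshift Dtot_sem)
qed

lemma Omega_sem: "Omega (sem xi) (sem eta) (sem nu) (sem e) = sem (sOmega xi eta nu e)"
  by (simp add: fun_eq_iff Omega_def sOmega_def Xpr_sem Dtot_sem)

lemma Evar_sem: "Evar (sem xi) (sem eta) (sem nu) (sem e) = sem (sEvar xi eta nu e)"
  by (simp add: fun_eq_iff Evar_def sEvar_def var_t_sem var_q_sem var_p_sem)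

end

definition xi_expr :: expr where
  "xi_expr = Add (Mul (Par 0) (Var (Ct 0))) (Fun Sf [] 0)"

definition eta_expr :: expr where
  "eta_expr = Fun Seta [] 0"

definition nu_expr :: expr where
  "nu_expr = Fun Snu [] 0"

definition Htilde_expr :: expr where
  "Htilde_expr =
     Add (Add (Mul (Var (Cp (-1) 0)) (Add (Mul (Par 1) (Var (Cq 0 1))) (Mul (Par 2) (Var (Cq (-1) 1)))))
              (Mul (Var (Cp 0 0)) (Add (Mul (Par 3) (Var (Cq 0 1))) (Mul (Par 4) (Var (Cq (-1) 1))))))
         (Mul (Lit (-1)) (Fun SH [] 0))"

lemma (in smooth_symbols) symbolic_identity:
  assumes "tj z 1 = tj z 0 + \<tau>" and "tj z (-1) = tj z 0 - \<tau>" and "\<And>t. f_fn (t + \<tau>) = f_fn t"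
  shows "sem (sEvar xi_expr eta_expr nu_expr (sOmega xi_expr eta_expr nu_expr Htilde_expr)) z
       = sem (sXpr xi_expr eta_expr nu_expr (sEvar xi_expr eta_expr nu_expr Htilde_expr)) z
         + sem (sDtot xi_expr) z * sem (sEvar xi_expr eta_expr nu_expr Htilde_expr) z"
proof -
  have f_next: "dir_derivs f_fn vs (tj z 0 + \<tau>) = dir_derivs f_fn vs (tj z 0)" for vs
    using dir_derivs_periodic[OF smooth_f] assms(3) by blast
  have f_prev: "dir_derivs f_fn vs (tj z 0 - \<tau>) = dir_derivs f_fn vs (tj z 0)" for vs
    using dir_derivs_periodic[OF smooth_f, of \<tau> vs "tj z 0 - \<tau>"] assms(3) by simp
  \<comment> \<open>dir_derivs stays folded, so that derivatives of the data are atoms for algebra.\<close>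
  show ?thesis
    by (simp add: xi_expr_def eta_expr_def nu_expr_def Htilde_expr_def sEvar_def sOmega_def sXpr_def
          sDtot_def svar_t_def svar_q_def svar_p_def sadd_def smul_def sneg_def slot_of_def
          del: dir_derivs.simps,
        simp add: H_args_def field_args_def assms(1,2) f_next f_prev del: dir_derivs.simps,
        algebra)
qed

theorem lemma4:
  fixes \<tau> \<alpha> a1 a2 a3 a4 :: real
    and f :: "real \<Rightarrow> real"
    and H :: "real \<Rightarrow> real \<Rightarrow> real \<Rightarrow> real \<Rightarrow> real \<Rightarrow> real \<Rightarrow> real"
    and \<eta> \<nu> :: "real \<Rightarrow> real \<Rightarrow> real \<Rightarrow> real"
    and z :: jet
  assumes tau_pos: "\<tau> > 0"
    and H_smooth: "smooth_fn (\<lambda>(t, tm, q, qm, p, pm). H t tm q qm p pm)"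
    and eta_smooth: "smooth_fn (\<lambda>(t, q, p). \<eta> t q p)"
    and nu_smooth: "smooth_fn (\<lambda>(t, q, p). \<nu> t q p)"
    and f_smooth: "smooth_fn f"
    and f_periodic: "\<forall>t. f (t + \<tau>) = f t"
    and lattice: "\<forall>k. tj z k = tj z 0 + real_of_int k * \<tau>"
  shows "Evar (xi_fn \<alpha> f) (lift3 \<eta>) (lift3 \<nu>)
            (Omega (xi_fn \<alpha> f) (lift3 \<eta>) (lift3 \<nu>) (Htilde a1 a2 a3 a4 H)) z
       = Xpr (xi_fn \<alpha> f) (lift3 \<eta>) (lift3 \<nu>)
            (Evar (xi_fn \<alpha> f) (lift3 \<eta>) (lift3 \<nu>) (Htilde a1 a2 a3 a4 H)) z
         + Dtot (xi_fn \<alpha> f) z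
            * Evar (xi_fn \<alpha> f) (lift3 \<eta>) (lift3 \<nu>) (Htilde a1 a2 a3 a4 H) z"
proof -
  interpret smooth_symbols "\<lambda>(t, tm, q, qm, p, pm). H t tm q qm p pm" "\<lambda>(t, q, p). \<eta> t q p"
    "\<lambda>(t, q, p). \<nu> t q p" f "[\<alpha>, a1, a2, a3, a4]"
    using H_smooth eta_smooth nu_smooth f_smooth by unfold_locales
  have data: "xi_fn \<alpha> f = sem xi_expr" "lift3 \<eta> = sem eta_expr" "lift3 \<nu> = sem nu_expr"
    "Htilde a1 a2 a3 a4 H = sem Htilde_expr"
    by (simp_all add: fun_eq_iff xi_fn_def xi_expr_def lift3_def eta_expr_def nu_expr_def
        field_args_def Htilde_def Htilde_expr_def H_args_def)
  have "tj z 1 = tj z 0 + \<tau>" "tj z (-1) = tj z 0 - \<tau>"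
    using lattice[rule_format, of 1] lattice[rule_format, of "-1"] by simp_all
  then show ?thesis
    unfolding data Evar_sem Omega_sem Xpr_sem Dtot_sem
    using symbolic_identity f_periodic by blast
qed

end
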